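(* Let $k\ge 2$ and let $a_1,\dots,a_k$ be simple closed curves on an oriented surface such that $a_i$ and $a_{i+1}$ meet transversely in exactly one point and $a_i\cap a_j=\emptyset$ for $|i-j|\ge 2$. Write $a_i$ for the right-handed Dehn twist $t_{a_i}$, and put $b_i=t_{a_{i+1}}(a_i)$, $\bar b_i=t_{a_{i+1}}^{-1}(a_i)$ (curves, also standing for their Dehn twists). Then (a) $(a_{k-1}a_{k-2}\cdots a_2a_1)\cdot(a_ka_{k-1}\cdots a_2a_1)\sim a_k^{\,k}\cdot \bar b_{k-1}\cdots\bar b_2\bar b_1$; (b) $(a_1a_2\cdots a_{k-1}a_k)\cdot(a_1a_2\cdots a_{k-2}a_{k-1})\sim b_1b_2\cdots b_{k-1}\cdot a_k^{\,k}$.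
   Context: For a curve $x$ and mapping class $f$, $t_{f(x)}=f t_x f^{-1}$. Two words (finite sequences) of right-handed Dehn twists are related by $\sim$ if one is obtained from the other by a finite sequence of elementary transformations (Hurwitz moves): $\cdots t_{v}t_{w}\cdots \sim \cdots t_{t_v(w)}t_v\cdots$ and $\cdots t_vt_w\cdots\sim\cdots t_w t_{t_w^{-1}(v)}\cdots$. In particular equivalent words represent the same mapping class. *)

theory Defs
  imports "HOL-Algebra.Group"
begin

text \<open>The mapping class group is a group G acting (by act) on the
set of isotopy classes of simple closed curves (type 'c); tw c is the right-handed
Dehn twist about c. A word of Dehn twists is represented by the list of its curves.\<close>

definition mcg_action :: "('g, 'm) monoid_scheme \<Rightarrow> ('g \<Rightarrow> 'c \<Rightarrow> 'c) \<Rightarrow> ('c \<Rightarrow> 'g) \<Rightarrow> bool" where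
  "mcg_action G act tw \<longleftrightarrow> group G
     \<and> (\<forall>c. act \<one>\<^bsub>G\<^esub> c = c)
     \<and> (\<forall>f\<in>carrier G. \<forall>g\<in>carrier G. \<forall>c. act (f \<otimes>\<^bsub>G\<^esub> g) c = act f (act g c))
     \<and> (\<forall>c. tw c \<in> carrier G)
     \<and> (\<forall>f\<in>carrier G. \<forall>c. tw (act f c) = f \<otimes>\<^bsub>G\<^esub> tw c \<otimes>\<^bsub>G\<^esub> inv\<^bsub>G\<^esub> f)"

definition hurwitz_step :: "('g, 'm) monoid_scheme \<Rightarrow> ('g \<Rightarrow> 'c \<Rightarrow> 'c) \<Rightarrow> ('c \<Rightarrow> 'g)
    \<Rightarrow> 'c list \<Rightarrow> 'c list \<Rightarrow> bool" where
  "hurwitz_step G act tw u u' \<longleftrightarrow> (\<exists>xs ys v w. u = xs @ [v, w] @ ys \<and>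
      (u' = xs @ [act (tw v) w, v] @ ys \<or> u' = xs @ [w, act (inv\<^bsub>G\<^esub> (tw w)) v] @ ys))"

definition hurwitz_equiv :: "('g, 'm) monoid_scheme \<Rightarrow> ('g \<Rightarrow> 'c \<Rightarrow> 'c) \<Rightarrow> ('c \<Rightarrow> 'g)
    \<Rightarrow> 'c list \<Rightarrow> 'c list \<Rightarrow> bool" where
  "hurwitz_equiv G act tw = (\<lambda>u u'. hurwitz_step G act tw u u' \<or> hurwitz_step G act tw u' u)\<^sup>*\<^sup>*"

end

theory Submission
  imports Defs
begin

text \<open>
  Passing from k to k + 1, the new letter a(k+1) slides past a(1), ..., a(k-1),
  whose curves are disjoint from it, and the induction hypothesis rewrites the remaining
  subword. What is left is a(k) a(k+1) a(k)^k (resp. its mirror image), and k applications of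
  the braid relation a(k) a(k+1) a(k) ~ a(k+1) a(k) a(k+1) turn it into a(k+1)^(k+1) followed by
  the twist about t_a(k+1)^-1 (a(k)) (resp. preceded by the twist about t_a(k+1) (a(k))).
  The braid relation only needs t_a(k) t_a(k+1) (a(k)) = a(k+1).
\<close>

locale hurwitz_words =
  fixes G :: "('g, 'm) monoid_scheme" and act :: "'g \<Rightarrow> 'c \<Rightarrow> 'c" and tw :: "'c \<Rightarrow> 'g"
begin

abbreviation hurwitz_equivalent :: "'c list \<Rightarrow> 'c list \<Rightarrow> bool" (infix "\<sim>" 50)
  where "u \<sim> v \<equiv> hurwitz_equiv G act tw u v"

lemma hurwitz_equiv_eq_symclp: "hurwitz_equiv G act tw = (symclp (hurwitz_step G act tw))\<^sup>*\<^sup>*"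
  unfolding hurwitz_equiv_def symclp_def by (rule refl)

lemma hurwitz_equiv_refl [simp]: "u \<sim> u"
  by (simp add: hurwitz_equiv_def)

lemma hurwitz_equiv_trans [trans]: "u \<sim> v \<Longrightarrow> v \<sim> w \<Longrightarrow> u \<sim> w"
  unfolding hurwitz_equiv_def by (rule rtranclp_trans)

lemma hurwitz_equiv_sym [sym]: "u \<sim> v \<Longrightarrow> v \<sim> u"
  unfolding hurwitz_equiv_eq_symclp by (rule rtranclp_symclp_sym)

lemma hurwitz_step_append:
  assumes "hurwitz_step G act tw u u'"
  shows "hurwitz_step G act tw (xs @ u @ ys) (xs @ u' @ ys)"
proof -
  obtain xs' ys' v w where u: "u = xs' @ [v, w] @ ys'"
    and u': "u' = xs' @ [act (tw v) w, v] @ ys' \<or> u' = xs' @ [w, act (inv\<^bsub>G\<^esub> (tw w)) v] @ ys'"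
    using assms unfolding hurwitz_step_def by blast
  show ?thesis
    unfolding hurwitz_step_def
    by (rule exI[of _ "xs @ xs'"], rule exI[of _ "ys' @ ys"]) (use u u' in auto)
qed

lemma hurwitz_equiv_append:
  assumes "u \<sim> u'"
  shows "xs @ u @ ys \<sim> xs @ u' @ ys"
  using assms unfolding hurwitz_equiv_def
proof (induction rule: rtranclp_induct)
  case (step v w)
  then show ?case
    using hurwitz_step_append by (blast intro: rtranclp.rtrancl_into_rtrancl)
qed simp

lemma hurwitz_equiv_Cons: "u \<sim> u' \<Longrightarrow> x # u \<sim> x # u'"
  using hurwitz_equiv_append[of u u' "[x]" "[]"] by simp

lemma hurwitz_equiv_append_left: "u \<sim> u' \<Longrightarrow> xs @ u \<sim> xs @ u'"
  using hurwitz_equiv_append[of u u' xs "[]"] by simp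

lemma hurwitz_equiv_append_right: "u \<sim> u' \<Longrightarrow> u @ ys \<sim> u' @ ys"
  using hurwitz_equiv_append[of u u' "[]" ys] by simp

lemma hurwitz_equiv_twist_left: "[v, w] \<sim> [act (tw v) w, v]"
  unfolding hurwitz_equiv_def hurwitz_step_def
  by (rule r_into_rtranclp) (rule disjI1, rule exI[of _ "[]"], rule exI[of _ "[]"], auto)

lemma hurwitz_equiv_twist_right: "[v, w] \<sim> [w, act (inv\<^bsub>G\<^esub> (tw w)) v]"
  unfolding hurwitz_equiv_def hurwitz_step_def
  by (rule r_into_rtranclp) (rule disjI1, rule exI[of _ "[]"], rule exI[of _ "[]"], auto)

lemma hurwitz_equiv_commute:
  assumes "\<forall>c \<in> set xs. act (tw z) c = c"
  shows "z # xs \<sim> xs @ [z]"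
  using assms
proof (induction xs)
  case (Cons c xs)
  have "z # c # xs \<sim> act (tw z) c # z # xs"
    using hurwitz_equiv_append_right[OF hurwitz_equiv_twist_left] by simp
  also have "\<dots> = c # z # xs"
    using Cons.prems by simp
  also have "\<dots> \<sim> c # xs @ [z]"
    using Cons by (simp add: hurwitz_equiv_Cons)
  finally show ?case by simp
qed simp

end

locale dehn_twist_action = hurwitz_words +
  assumes mcg_action: "mcg_action G act tw"
begin

lemma hurwitz_equiv_braid:
  assumes "act (tw x \<otimes>\<^bsub>G\<^esub> tw y) x = y"
  shows "[x, y, x] \<sim> [y, x, y]"
proof -
  have "[x, y, x] \<sim> [x, act (tw y) x, y]"
    using hurwitz_equiv_Cons[OF hurwitz_equiv_twist_left] .
  also have "\<dots> \<sim> [act (tw x) (act (tw y) x), x, y]"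
    using hurwitz_equiv_append_right[OF hurwitz_equiv_twist_left, of _ _ "[y]"] by simp
  also have "act (tw x) (act (tw y) x) = y"
    using mcg_action assms unfolding mcg_action_def by metis
  finally show ?thesis .
qed

lemma hurwitz_equiv_braid_power_left:
  assumes "act (tw x \<otimes>\<^bsub>G\<^esub> tw y) x = y"
  shows "x # y # replicate m x \<sim> replicate (Suc m) y @ [act (inv\<^bsub>G\<^esub> (tw y)) x]"
proof (induction m)
  case 0
  show ?case using hurwitz_equiv_twist_right by simp
next
  case (Suc m)
  have "x # y # replicate (Suc m) x = [x, y, x] @ replicate m x"
    by simp
  also have "\<dots> \<sim> [y, x, y] @ replicate m x"
    using hurwitz_equiv_append_right[OF hurwitz_equiv_braid[OF assms]] .
  also have "\<dots> \<sim> y # replicate (Suc m) y @ [act (inv\<^bsub>G\<^esub> (tw y)) x]"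
    using hurwitz_equiv_Cons[OF Suc.IH] by simp
  finally show ?case by simp
qed

lemma hurwitz_equiv_braid_power_right:
  assumes "act (tw x \<otimes>\<^bsub>G\<^esub> tw y) x = y"
  shows "replicate m x @ [y, x] \<sim> act (tw y) x # replicate (Suc m) y"
proof (induction m)
  case 0
  show ?case using hurwitz_equiv_twist_left by simp
next
  case (Suc m)
  have "replicate (Suc m) x @ [y, x] = replicate m x @ [x, y, x]"
    by (simp add: replicate_app_Cons_same)
  also have "\<dots> \<sim> replicate m x @ [y, x, y]"
    using hurwitz_equiv_append_left[OF hurwitz_equiv_braid[OF assms]] .
  also have "\<dots> = (replicate m x @ [y, x]) @ [y]"
    by simp
  also have "\<dots> \<sim> (act (tw y) x # replicate (Suc m) y) @ [y]"
    using hurwitz_equiv_append_right[OF Suc.IH] .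
  finally show ?case by (simp add: replicate_append_same)
qed

lemma chain_hurwitz_equiv_left:
  assumes "\<And>i. 1 \<le> i \<Longrightarrow> i < k \<Longrightarrow> act (tw (a i) \<otimes>\<^bsub>G\<^esub> tw (a (Suc i))) (a i) = a (Suc i)"
    and "\<And>i j. 1 \<le> i \<Longrightarrow> i \<le> k \<Longrightarrow> 1 \<le> j \<Longrightarrow> j \<le> k \<Longrightarrow> i + 2 \<le> j \<or> j + 2 \<le> i
           \<Longrightarrow> act (tw (a i)) (a j) = a j"
  shows "map a (rev [1..<k]) @ map a (rev [1..<Suc k])
           \<sim> replicate k (a k) @ map (\<lambda>i. act (inv\<^bsub>G\<^esub> (tw (a (Suc i)))) (a i)) (rev [1..<k])"
  using assms
proof (induction k)
  case (Suc k)
  define P where "P = map a (rev [1..<k])"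
  define b where "b = (\<lambda>i. act (inv\<^bsub>G\<^esub> (tw (a (Suc i)))) (a i))"
  show ?case
  proof (cases "k = 0")
    case False
    have "map a (rev [1..<k]) @ map a (rev [1..<Suc k]) \<sim> replicate k (a k) @ map b (rev [1..<k])"
      unfolding b_def by (rule Suc.IH) (use Suc.prems in auto)
    then have IH: "P @ a k # P \<sim> replicate k (a k) @ map b (rev [1..<k])"
      using False unfolding P_def by simp
    have "\<forall>c \<in> set P. act (tw (a (Suc k))) c = c"
      unfolding P_def using Suc.prems(2) by auto
    then have "P @ [a (Suc k)] \<sim> a (Suc k) # P"
      by (rule hurwitz_equiv_sym[OF hurwitz_equiv_commute])
    from hurwitz_equiv_append[OF this, of "[a k]" "a k # P"]
    have "a k # P @ a (Suc k) # a k # P \<sim> a k # a (Suc k) # P @ a k # P"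
      by simp
    also have "\<dots> \<sim> [a k, a (Suc k)] @ replicate k (a k) @ map b (rev [1..<k])"
      using hurwitz_equiv_append_left[OF IH, of "[a k, a (Suc k)]"] by simp
    also have "\<dots> \<sim> (replicate (Suc k) (a (Suc k)) @ [b k]) @ map b (rev [1..<k])"
      using hurwitz_equiv_append_right[OF hurwitz_equiv_braid_power_left] Suc.prems(1) False
      unfolding b_def by simp
    finally show ?thesis
      using False unfolding P_def b_def by simp
  qed simp
qed simp

lemma chain_hurwitz_equiv_right:
  assumes "\<And>i. 1 \<le> i \<Longrightarrow> i < k \<Longrightarrow> act (tw (a i) \<otimes>\<^bsub>G\<^esub> tw (a (Suc i))) (a i) = a (Suc i)"
    and "\<And>i j. 1 \<le> i \<Longrightarrow> i \<le> k \<Longrightarrow> 1 \<le> j \<Longrightarrow> j \<le> k \<Longrightarrow> i + 2 \<le> j \<or> j + 2 \<le> i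
           \<Longrightarrow> act (tw (a i)) (a j) = a j"
  shows "map a [1..<Suc k] @ map a [1..<k]
           \<sim> map (\<lambda>i. act (tw (a (Suc i))) (a i)) [1..<k] @ replicate k (a k)"
  using assms
proof (induction k)
  case (Suc k)
  define Q where "Q = map a [1..<k]"
  define b where "b = (\<lambda>i. act (tw (a (Suc i))) (a i))"
  show ?case
  proof (cases "k = 0")
    case False
    have "map a [1..<Suc k] @ map a [1..<k] \<sim> map b [1..<k] @ replicate k (a k)"
      unfolding b_def by (rule Suc.IH) (use Suc.prems in auto)
    then have IH: "Q @ a k # Q \<sim> map b [1..<k] @ replicate k (a k)"
      using False unfolding Q_def by simp
    have "\<forall>c \<in> set Q. act (tw (a (Suc k))) c = c"
      unfolding Q_def using Suc.prems(2) by auto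
    then have "a (Suc k) # Q \<sim> Q @ [a (Suc k)]"
      by (rule hurwitz_equiv_commute)
    from hurwitz_equiv_append[OF this, of "Q @ [a k]" "[a k]"]
    have "Q @ a k # a (Suc k) # Q @ [a k] \<sim> (Q @ a k # Q) @ [a (Suc k), a k]"
      by simp
    also have "\<dots> \<sim> map b [1..<k] @ replicate k (a k) @ [a (Suc k), a k]"
      using hurwitz_equiv_append_right[OF IH, of "[a (Suc k), a k]"] by simp
    also have "\<dots> \<sim> map b [1..<k] @ b k # replicate (Suc k) (a (Suc k))"
      using hurwitz_equiv_append_left[OF hurwitz_equiv_braid_power_right] Suc.prems(1) False
      unfolding b_def by simp
    finally show ?thesis
      using False unfolding Q_def b_def by simp
  qed simp
qed simp

end

theorem lemma3p3:
  fixes G :: "('g, 'm) monoid_scheme" and act :: "'g \<Rightarrow> 'c \<Rightarrow> 'c" and tw :: "'c \<Rightarrow> 'g"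
    and a :: "nat \<Rightarrow> 'c" and k :: nat
  assumes "mcg_action G act tw"
    and "k \<ge> 2"
    \<comment> \<open>a_i, a_{i+1} meet transversely once: t_{a_i} t_{a_{i+1}} (a_i) = a_{i+1} and vice versa\<close>
    and "\<And>i. 1 \<le> i \<Longrightarrow> i < k \<Longrightarrow> act (tw (a i) \<otimes>\<^bsub>G\<^esub> tw (a (Suc i))) (a i) = a (Suc i)"
    and "\<And>i. 1 \<le> i \<Longrightarrow> i < k \<Longrightarrow> act (tw (a (Suc i)) \<otimes>\<^bsub>G\<^esub> tw (a i)) (a (Suc i)) = a i"
    \<comment> \<open>disjoint curves: the twist about one fixes the other\<close>
    and "\<And>i j. 1 \<le> i \<Longrightarrow> i \<le> k \<Longrightarrow> 1 \<le> j \<Longrightarrow> j \<le> k \<Longrightarrow> i + 2 \<le> j \<or> j + 2 \<le> i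
           \<Longrightarrow> act (tw (a i)) (a j) = a j"
  shows "hurwitz_equiv G act tw
           (map a (rev [1..<k]) @ map a (rev [1..<Suc k]))
           (replicate k (a k) @ map (\<lambda>i. act (inv\<^bsub>G\<^esub> (tw (a (Suc i)))) (a i)) (rev [1..<k]))
       \<and> hurwitz_equiv G act tw
           (map a [1..<Suc k] @ map a [1..<k])
           (map (\<lambda>i. act (tw (a (Suc i))) (a i)) [1..<k] @ replicate k (a k))"
proof -
  interpret dehn_twist_action G act tw
    by unfold_locales (rule assms(1))
  show ?thesis
    using chain_hurwitz_equiv_left[of k a, OF assms(3,5)] chain_hurwitz_equiv_right[of k a, OF assms(3,5)]
    by blast
qed

end
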